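(* In the one-vs-all multi-class setting, let $\hat c$ be the clean predicted class of test node $t$. For each $c\in[K]$ let $P^c$ denote the feasible set of the sample-wise MILP constraints (with binary labels $\mathbf{y}^c$ in place of $\mathbf{y}$ and budget $\lfloor\epsilon m\rfloor$, big-M values $M_{u_i}=\sum_jC|Q_{ij}|-1$, $M_{v_i}=\sum_jC|Q_{ij}|+1$), namely variables $\boldsymbol{\alpha},\tilde{\mathbf{y}},\mathbf{z},\mathbf{u},\mathbf{v}\in\mathbb{R}^m$, $\mathbf{y}',\mathbf{s},\mathbf{t}\in\{0,1\}^m$, $\mathbf{R}\in\mathbb{R}^{m\times m}$ with $\sum_i(1-y^c_i\tilde y_i)\le2\lfloor\epsilon m\rfloor$ and for all $i,j$: $\tilde y_i=2y_i'-1$, $\sum_jR_{ij}Q_{ij}-1-u_i+v_i=0$, $u_i,v_i\ge0$, $-C(1+\tilde y_i)\le R_{ij}+z_j\le C(1+\tilde y_i)$, $-C(1-\tilde y_i)\le R_{ij}-z_j\le C(1-\tilde y_i)$, $-\alpha_i\le z_i\le\alpha_i$, $\alpha_i-C(1-\tilde y_i)\le z_i\le C(1+\tilde y_i)-\alpha_i$, $u_i\le M_{u_i}s_i$, $\alpha_i\le C(1-s_i)$, $v_i\le M_{v_i}t_i$, $\alpha_i\ge Ct_i$. Let $m_{\hat c}=\min_{P^{\hat c}}\sum_iz_iQ_{ti}$ and, for $c\ne\hat c$, $M_c=\max_{P^c}\sum_iz_iQ_{ti}$. If $m_{\hat c}>\max_{c\ne\hat c}M_c$, then the prediction for $t$ is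 certifiably robust, i.e. $p_{\hat c}(\tilde{\mathbf{y}})-\max_{c\ne\hat c}p_c(\tilde{\mathbf{y}})>0$ for all $\tilde{\mathbf{y}}\in\mathcal{A}(\mathbf{y})$.
   Context: Setting: $K$ classes, $m$ labeled nodes, $C>0$, symmetric positive semidefinite kernel $\mathbf{Q}$ on labeled nodes and kernel values $Q_{ti}$ of test node $t$. For $\mathbf{w}\in\{-1,1\}^m$ the bias-free SVM dual is $\min_{\boldsymbol\alpha}-\sum_i\alpha_i+\tfrac12\sum_{i,j}w_iw_j\alpha_i\alpha_jQ_{ij}$ s.t. $0\le\alpha_i\le C$, with solution set $\mathcal{S}(\mathbf{w})$. For $\tilde{\mathbf{y}}\in[K]^m$, $\tilde{\mathbf{y}}^c\in\{-1,1\}^m$ has $\tilde y^c_i=1$ iff $\tilde y_i=c$, and $p_c(\tilde{\mathbf{y}})=\sum_i\tilde y^c_i\alpha^c_iQ_{ti}$ for $\boldsymbol\alpha^c\in\mathcal{S}(\tilde{\mathbf{y}}^c)$; the predicted class is $\arg\max_cp_c$. $\mathbf{y}^c$ is defined analogously from the clean labels $\mathbf{y}\in[K]^m$. $\mathcal{A}(\mathbf{y})=\{\tilde{\mathbf{y}}\in[K]^m:\|\tilde{\mathbf{y}}-\mathbf{y}\|_0\le\lfloor\epsilon m\rfloor\}$. *)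

theory Defs
  imports Main "HOL-Library.Disjoint_Sets" Complex_Main
begin

text \<open>Indices of labeled nodes are the naturals i < m; vectors are functions nat => real
  (only the first m entries matter). Classes are [K] = {1..K}.\<close>

definition binlab :: "(nat \<Rightarrow> nat) \<Rightarrow> nat \<Rightarrow> nat \<Rightarrow> real" where
  "binlab y c i = (if y i = c then 1 else -1)"

definition svm_obj :: "nat \<Rightarrow> (nat \<Rightarrow> nat \<Rightarrow> real) \<Rightarrow> (nat \<Rightarrow> real) \<Rightarrow> (nat \<Rightarrow> real) \<Rightarrow> real" where
  "svm_obj m Q w \<alpha> = - (\<Sum>i<m. \<alpha> i) + 1/2 * (\<Sum>i<m. \<Sum>j<m. w i * w j * \<alpha> i * \<alpha> j * Q i j)"

definition svm_box :: "nat \<Rightarrow> real \<Rightarrow> (nat \<Rightarrow> real) \<Rightarrow> bool" where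
  "svm_box m C \<alpha> \<longleftrightarrow> (\<forall>i<m. 0 \<le> \<alpha> i \<and> \<alpha> i \<le> C)"

definition svm_sol :: "nat \<Rightarrow> real \<Rightarrow> (nat \<Rightarrow> nat \<Rightarrow> real) \<Rightarrow> (nat \<Rightarrow> real) \<Rightarrow> (nat \<Rightarrow> real) set" where
  "svm_sol m C Q w = {\<alpha>. svm_box m C \<alpha> \<and> (\<forall>\<beta>. svm_box m C \<beta> \<longrightarrow> svm_obj m Q w \<alpha> \<le> svm_obj m Q w \<beta>)}"

definition svm_score :: "nat \<Rightarrow> (nat \<Rightarrow> real) \<Rightarrow> (nat \<Rightarrow> real) \<Rightarrow> (nat \<Rightarrow> real) \<Rightarrow> real" where
  "svm_score m Qt w \<alpha> = (\<Sum>i<m. w i * \<alpha> i * Qt i)"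

definition adv_set :: "nat \<Rightarrow> nat \<Rightarrow> real \<Rightarrow> (nat \<Rightarrow> nat) \<Rightarrow> (nat \<Rightarrow> nat) set" where
  "adv_set m K eps y = {yt. (\<forall>i<m. yt i \<in> {1..K}) \<and>
      card {i. i < m \<and> yt i \<noteq> y i} \<le> nat \<lfloor>eps * real m\<rfloor>}"

definition bigMu :: "nat \<Rightarrow> real \<Rightarrow> (nat \<Rightarrow> nat \<Rightarrow> real) \<Rightarrow> nat \<Rightarrow> real" where
  "bigMu m C Q i = (\<Sum>j<m. C * \<bar>Q i j\<bar>) - 1"

definition bigMv :: "nat \<Rightarrow> real \<Rightarrow> (nat \<Rightarrow> nat \<Rightarrow> real) \<Rightarrow> nat \<Rightarrow> real" where
  "bigMv m C Q i = (\<Sum>j<m. C * \<bar>Q i j\<bar>) + 1"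

definition milp_feasible ::
  "nat \<Rightarrow> real \<Rightarrow> (nat \<Rightarrow> nat \<Rightarrow> real) \<Rightarrow> (nat \<Rightarrow> real) \<Rightarrow> nat \<Rightarrow>
   (nat \<Rightarrow> real) \<Rightarrow> (nat \<Rightarrow> real) \<Rightarrow> (nat \<Rightarrow> real) \<Rightarrow> (nat \<Rightarrow> real) \<Rightarrow> (nat \<Rightarrow> real) \<Rightarrow>
   (nat \<Rightarrow> real) \<Rightarrow> (nat \<Rightarrow> real) \<Rightarrow> (nat \<Rightarrow> real) \<Rightarrow> (nat \<Rightarrow> nat \<Rightarrow> real) \<Rightarrow> bool" where
  "milp_feasible m C Q yb B \<alpha> yt z u v yp s t R \<longleftrightarrow>
     (\<Sum>i<m. 1 - yb i * yt i) \<le> 2 * real B \<and>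
     (\<forall>i<m. yp i \<in> {0,1} \<and> s i \<in> {0,1} \<and> t i \<in> {0,1}) \<and>
     (\<forall>i<m.
        yt i = 2 * yp i - 1 \<and>
        (\<Sum>j<m. R i j * Q i j) - 1 - u i + v i = 0 \<and>
        u i \<ge> 0 \<and> v i \<ge> 0 \<and>
        - \<alpha> i \<le> z i \<and> z i \<le> \<alpha> i \<and>
        \<alpha> i - C * (1 - yt i) \<le> z i \<and> z i \<le> C * (1 + yt i) - \<alpha> i \<and>
        u i \<le> bigMu m C Q i * s i \<and> \<alpha> i \<le> C * (1 - s i) \<and>
        v i \<le> bigMv m C Q i * t i \<and> \<alpha> i \<ge> C * t i) \<and>
     (\<forall>i<m. \<forall>j<m.
        - C * (1 + yt i) \<le> R i j + z j \<and> R i j + z j \<le> C * (1 + yt i) \<and>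
        - C * (1 - yt i) \<le> R i j - z j \<and> R i j - z j \<le> C * (1 - yt i))"

definition milp_vals ::
  "nat \<Rightarrow> real \<Rightarrow> (nat \<Rightarrow> nat \<Rightarrow> real) \<Rightarrow> (nat \<Rightarrow> real) \<Rightarrow> (nat \<Rightarrow> real) \<Rightarrow> nat \<Rightarrow> real set" where
  "milp_vals m C Q Qt yb B = {(\<Sum>i<m. z i * Qt i) | \<alpha> yt z u v yp s t R.
      milp_feasible m C Q yb B \<alpha> yt z u v yp s t R}"

definition milp_min :: "nat \<Rightarrow> real \<Rightarrow> (nat \<Rightarrow> nat \<Rightarrow> real) \<Rightarrow> (nat \<Rightarrow> real) \<Rightarrow> (nat \<Rightarrow> real) \<Rightarrow> nat \<Rightarrow> real" where
  "milp_min m C Q Qt yb B = Inf (milp_vals m C Q Qt yb B)"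

definition milp_max :: "nat \<Rightarrow> real \<Rightarrow> (nat \<Rightarrow> nat \<Rightarrow> real) \<Rightarrow> (nat \<Rightarrow> real) \<Rightarrow> (nat \<Rightarrow> real) \<Rightarrow> nat \<Rightarrow> real" where
  "milp_max m C Q Qt yb B = Sup (milp_vals m C Q Qt yb B)"

end

theory Submission
  imports Defs
begin

text \<open>Fix a perturbed labelling within the budget and an SVM dual solution \<open>\<alpha>\<close> for the
  one-vs-all labels \<open>w\<close> of class \<open>c\<close>. The first-order optimality (KKT) conditions of the box
  constrained dual say that coordinate \<open>i\<close> sits at \<open>0\<close> when its margin exceeds \<open>1\<close> and at \<open>C\<close>
  when it falls below \<open>1\<close>. This is exactly what the big-M constraints of the MILP encode, so
  \<open>z = w \<alpha>\<close> together with the positive and negative parts of the margin slack is a feasible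
  point of \<open>P\<^sup>c\<close> whose objective is the score \<open>p\<^sub>c\<close>. Hence the MILP minimum for the clean
  class bounds its perturbed score from below, the MILP maximum for any other class bounds that
  class's score from above, and the certificate separates the two.\<close>

definition svm_margin :: "nat \<Rightarrow> (nat \<Rightarrow> nat \<Rightarrow> real) \<Rightarrow> (nat \<Rightarrow> real) \<Rightarrow> (nat \<Rightarrow> real) \<Rightarrow> nat \<Rightarrow> real"
  where "svm_margin m Q w \<alpha> i = (\<Sum>j<m. w i * w j * \<alpha> j * Q i j)"

lemma binlab_cases: "binlab y c i = 1 \<or> binlab y c i = -1"
  by (simp add: binlab_def)

lemma binlab_square: "binlab y c i * binlab y c i = 1"
  by (simp add: binlab_def)

lemma quadratic_nonneg_on_interval_imp_slope_nonneg:
  fixes a b q :: real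
  assumes "a > 0" and nonneg: "\<And>h. 0 \<le> h \<Longrightarrow> h \<le> a \<Longrightarrow> 0 \<le> h * b + h\<^sup>2 / 2 * q"
  shows "b \<ge> 0"
proof (rule ccontr)
  assume "\<not> b \<ge> 0"
  define h where "h = min a (- b / (\<bar>q\<bar> + 1))"
  have "0 < \<bar>q\<bar> + 1" by simp
  then have "h > 0" using \<open>a > 0\<close> \<open>\<not> b \<ge> 0\<close> by (simp add: h_def divide_neg_pos)
  have "h * (\<bar>q\<bar> + 1) \<le> - b"
    unfolding h_def by (smt (verit) abs_ge_zero min.cobounded2 pos_le_divide_eq)
  then have "h * \<bar>q\<bar> < - b"
    using \<open>h > 0\<close> by (simp add: algebra_simps)
  then have "h * (h * \<bar>q\<bar>) < - (h * b)"
    using mult_strict_left_mono[OF _ \<open>h > 0\<close>] by fastforce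
  moreover have "h\<^sup>2 / 2 * q \<le> h * (h * \<bar>q\<bar>)"
    using \<open>h > 0\<close> by (simp add: power2_eq_square)
  ultimately have "h * b + h\<^sup>2 / 2 * q < 0" by linarith
  moreover have "h \<le> a" by (simp add: h_def)
  ultimately show False using nonneg[of h] \<open>h > 0\<close> by simp
qed

lemma sum_indicator_mult:
  fixes f :: "nat \<Rightarrow> real"
  assumes "k < m"
  shows "(\<Sum>i<m. (if i = k then 1 else 0) * f i) = f k"
proof -
  have "(\<Sum>i<m. (if i = k then 1 else 0) * f i) = (\<Sum>i<m. if i = k then f i else 0)"
    by (intro sum.cong) auto
  also have "\<dots> = f k" using assms by (simp add: sum.delta)
  finally show ?thesis .
qed

lemma svm_obj_coordinate_shift:
  fixes Q :: "nat \<Rightarrow> nat \<Rightarrow> real"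
  assumes sym: "\<forall>i<m. \<forall>j<m. Q i j = Q j i" and "k < m" and "w k * w k = 1"
  shows "svm_obj m Q w (\<lambda>i. \<alpha> i + h * (if i = k then 1 else 0)) =
    svm_obj m Q w \<alpha> + h * (svm_margin m Q w \<alpha> k - 1) + h\<^sup>2 / 2 * Q k k"
proof -
  define d :: "nat \<Rightarrow> real" where "d i = (if i = k then 1 else 0)" for i
  have lin: "(\<Sum>i<m. \<alpha> i + h * d i) = (\<Sum>i<m. \<alpha> i) + h"
    using \<open>k < m\<close> by (simp add: sum.distrib d_def flip: sum_distrib_left)
  have quad: "(\<Sum>i<m. \<Sum>j<m. w i * w j * (\<alpha> i + h * d i) * (\<alpha> j + h * d j) * Q i j)
     = (\<Sum>i<m. \<Sum>j<m. w i * w j * \<alpha> i * \<alpha> j * Q i j)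
       + h * (\<Sum>i<m. \<Sum>j<m. d i * (w i * w j * \<alpha> j * Q i j))
       + h * (\<Sum>i<m. \<Sum>j<m. d j * (w i * w j * \<alpha> i * Q i j))
       + h\<^sup>2 * (\<Sum>i<m. \<Sum>j<m. d i * (d j * (w i * w j * Q i j)))"
    by (simp add: sum.distrib sum_distrib_left algebra_simps power2_eq_square)
  have row: "(\<Sum>i<m. \<Sum>j<m. d i * (w i * w j * \<alpha> j * Q i j)) = svm_margin m Q w \<alpha> k"
    using \<open>k < m\<close> by (simp add: d_def svm_margin_def sum_indicator_mult flip: sum_distrib_left)
  have "(\<Sum>i<m. \<Sum>j<m. d j * (w i * w j * \<alpha> i * Q i j)) = (\<Sum>i<m. w i * w k * \<alpha> i * Q i k)"
    using \<open>k < m\<close>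
    by (simp add: d_def sum_indicator_mult sum_distrib_left[symmetric] flip: sum.swap[of _ "{..<m}"])
  also have "\<dots> = svm_margin m Q w \<alpha> k"
    using sym \<open>k < m\<close> by (auto simp: svm_margin_def mult_ac intro: sum.cong)
  finally have col: "(\<Sum>i<m. \<Sum>j<m. d j * (w i * w j * \<alpha> i * Q i j)) = svm_margin m Q w \<alpha> k" .
  have diag: "(\<Sum>i<m. \<Sum>j<m. d i * (d j * (w i * w j * Q i j))) = Q k k"
    using \<open>k < m\<close> \<open>w k * w k = 1\<close> by (simp add: d_def sum_indicator_mult flip: sum_distrib_left)
  show ?thesis
    unfolding svm_obj_def d_def[symmetric] lin quad row col diag
    by (simp add: algebra_simps)
qed

lemma svm_sol_kkt:
  fixes Q :: "nat \<Rightarrow> nat \<Rightarrow> real"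
  assumes sym: "\<forall>i<m. \<forall>j<m. Q i j = Q j i" and "k < m" and "w k * w k = 1"
    and sol: "\<alpha> \<in> svm_sol m C Q w"
  shows "0 < \<alpha> k \<Longrightarrow> svm_margin m Q w \<alpha> k \<le> 1"
    and "\<alpha> k < C \<Longrightarrow> 1 \<le> svm_margin m Q w \<alpha> k"
proof -
  define g where "g = svm_margin m Q w \<alpha> k"
  define \<beta> where "\<beta> h = (\<lambda>i. \<alpha> i + h * (if i = k then 1 else 0))" for h :: real
  have box: "svm_box m C \<alpha>"
    and opt: "\<And>\<gamma>. svm_box m C \<gamma> \<Longrightarrow> svm_obj m Q w \<alpha> \<le> svm_obj m Q w \<gamma>"
    using sol by (auto simp: svm_sol_def)
  have increase: "0 \<le> h * (g - 1) + h\<^sup>2 / 2 * Q k k"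
    if "0 \<le> \<alpha> k + h" "\<alpha> k + h \<le> C" for h
  proof -
    have "svm_box m C (\<beta> h)" using box that by (auto simp: svm_box_def \<beta>_def)
    then have "svm_obj m Q w \<alpha> \<le> svm_obj m Q w (\<beta> h)" by (rule opt)
    then show ?thesis
      using svm_obj_coordinate_shift[where w = w and k = k and \<alpha> = \<alpha> and h = h, OF sym \<open>k < m\<close> \<open>w k * w k = 1\<close>]
      by (simp add: \<beta>_def g_def)
  qed
  have "0 \<le> \<alpha> k" "\<alpha> k \<le> C" using box \<open>k < m\<close> by (auto simp: svm_box_def)
  show "svm_margin m Q w \<alpha> k \<le> 1" if "0 < \<alpha> k"
  proof -
    have "0 \<le> h * (1 - g) + h\<^sup>2 / 2 * Q k k" if "0 \<le> h" "h \<le> \<alpha> k" for h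
      using increase[of "- h"] that \<open>\<alpha> k \<le> C\<close> by (simp add: algebra_simps)
    then have "0 \<le> 1 - g"
      using \<open>0 < \<alpha> k\<close> by (rule quadratic_nonneg_on_interval_imp_slope_nonneg[rotated])
    then show ?thesis by (simp add: g_def)
  qed
  show "1 \<le> svm_margin m Q w \<alpha> k" if "\<alpha> k < C"
  proof -
    have "0 \<le> h * (g - 1) + h\<^sup>2 / 2 * Q k k" if "0 \<le> h" "h \<le> C - \<alpha> k" for h
      using increase[of h] that \<open>0 \<le> \<alpha> k\<close> by simp
    moreover have "0 < C - \<alpha> k" using \<open>\<alpha> k < C\<close> by simp
    ultimately have "0 \<le> g - 1" by (rule quadratic_nonneg_on_interval_imp_slope_nonneg[rotated])
    then show ?thesis by (simp add: g_def)
  qed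
qed

lemma svm_margin_abs_le:
  assumes "svm_box m C \<alpha>"
  shows "\<bar>svm_margin m Q (binlab yt c) \<alpha> i\<bar> \<le> (\<Sum>j<m. C * \<bar>Q i j\<bar>)"
proof -
  let ?w = "binlab yt c"
  have "\<bar>svm_margin m Q ?w \<alpha> i\<bar> \<le> (\<Sum>j<m. \<bar>?w i * ?w j * \<alpha> j * Q i j\<bar>)"
    unfolding svm_margin_def by (rule sum_abs)
  also have "\<dots> \<le> (\<Sum>j<m. C * \<bar>Q i j\<bar>)"
  proof (intro sum_mono)
    fix j assume "j \<in> {..<m}"
    then have "0 \<le> \<alpha> j" "\<alpha> j \<le> C" using assms by (auto simp: svm_box_def)
    moreover have "\<bar>?w i * ?w j\<bar> = 1" using binlab_cases[of yt c i] binlab_cases[of yt c j] by auto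
    ultimately show "\<bar>?w i * ?w j * \<alpha> j * Q i j\<bar> \<le> C * \<bar>Q i j\<bar>"
      by (simp add: abs_mult mult_right_mono)
  qed
  finally show ?thesis .
qed

lemma binlab_flip_budget:
  assumes "card {i. i < m \<and> yt i \<noteq> y i} \<le> B"
  shows "(\<Sum>i<m. 1 - binlab y c i * binlab yt c i) \<le> 2 * real B"
proof -
  have "(\<Sum>i<m. 1 - binlab y c i * binlab yt c i) \<le> (\<Sum>i<m. if yt i \<noteq> y i then 2 else 0)"
    by (intro sum_mono) (auto simp: binlab_def)
  also have "\<dots> = 2 * real (card {i. i < m \<and> yt i \<noteq> y i})"
    by (simp add: sum.If_cases Collect_conj_eq lessThan_def Int_commute)
  also have "\<dots> \<le> 2 * real B" using assms by simp
  finally show ?thesis .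
qed

lemma milp_feasible_svm_sol:
  fixes Q :: "nat \<Rightarrow> nat \<Rightarrow> real"
  assumes sym: "\<forall>i<m. \<forall>j<m. Q i j = Q j i"
    and card: "card {i. i < m \<and> yt i \<noteq> y i} \<le> B"
    and sol: "\<alpha> \<in> svm_sol m C Q (binlab yt c)"
  defines "w \<equiv> binlab yt c"
    and "g \<equiv> svm_margin m Q (binlab yt c) \<alpha>"
  shows "milp_feasible m C Q (binlab y c) B \<alpha> w (\<lambda>i. w i * \<alpha> i)
     (\<lambda>i. max (g i - 1) 0) (\<lambda>i. max (1 - g i) 0) (\<lambda>i. (w i + 1) / 2)
     (\<lambda>i. if g i > 1 then 1 else 0) (\<lambda>i. if g i < 1 then 1 else 0) (\<lambda>i j. w i * (w j * \<alpha> j))"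
  unfolding milp_feasible_def
proof (intro conjI allI impI)
  have box: "svm_box m C \<alpha>" using sol by (simp add: svm_sol_def)
  show "(\<Sum>i<m. 1 - binlab y c i * w i) \<le> 2 * real B"
    unfolding w_def by (rule binlab_flip_budget[OF card])
  fix i assume i: "i < m"
  have a: "0 \<le> \<alpha> i" "\<alpha> i \<le> C" using box i by (auto simp: svm_box_def)
  note w_cases = binlab_cases[of yt c, folded w_def]
  note kkt = svm_sol_kkt[OF sym i binlab_square sol, folded g_def]
  have g_bound: "\<bar>g i\<bar> \<le> (\<Sum>j<m. C * \<bar>Q i j\<bar>)"
    unfolding g_def by (rule svm_margin_abs_le[OF box])
  show "(\<lambda>i. (w i + 1) / 2) i \<in> {0, 1}" using w_cases[of i] by auto
  show "(\<lambda>i. if g i > 1 then 1 else 0) i \<in> {0, 1}" "(\<lambda>i. if g i < 1 then 1 else 0) i \<in> {0, 1}"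
    by auto
  show "w i = 2 * ((w i + 1) / 2) - 1" by (simp add: field_simps)
  show "(\<Sum>j<m. w i * (w j * \<alpha> j) * Q i j) - 1 - max (g i - 1) 0 + max (1 - g i) 0 = 0"
    by (simp add: g_def w_def svm_margin_def mult_ac)
  show "max (g i - 1) 0 \<ge> 0" "max (1 - g i) 0 \<ge> 0" by auto
  show "- \<alpha> i \<le> w i * \<alpha> i" "w i * \<alpha> i \<le> \<alpha> i"
    "\<alpha> i - C * (1 - w i) \<le> w i * \<alpha> i" "w i * \<alpha> i \<le> C * (1 + w i) - \<alpha> i"
    using w_cases[of i] a by auto
  show "max (g i - 1) 0 \<le> bigMu m C Q i * (if g i > 1 then 1 else 0)"
    "max (1 - g i) 0 \<le> bigMv m C Q i * (if g i < 1 then 1 else 0)"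
    using g_bound by (auto simp: bigMu_def bigMv_def)
  show "\<alpha> i \<le> C * (1 - (if g i > 1 then 1 else 0))"
  proof (cases "g i > 1")
    case True
    then have "\<not> 0 < \<alpha> i" using kkt(1) by linarith
    with True a show ?thesis by simp
  qed (use a in simp)
  show "\<alpha> i \<ge> C * (if g i < 1 then 1 else 0)"
  proof (cases "g i < 1")
    case True
    then have "\<not> \<alpha> i < C" using kkt(2) by linarith
    with True a show ?thesis by simp
  qed (use a in simp)
  fix j assume j: "j < m"
  have "0 \<le> \<alpha> j" "\<alpha> j \<le> C" using box j by (auto simp: svm_box_def)
  then show "- C * (1 + w i) \<le> w i * (w j * \<alpha> j) + w j * \<alpha> j"
    "w i * (w j * \<alpha> j) + w j * \<alpha> j \<le> C * (1 + w i)"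
    "- C * (1 - w i) \<le> w i * (w j * \<alpha> j) - w j * \<alpha> j"
    "w i * (w j * \<alpha> j) - w j * \<alpha> j \<le> C * (1 - w i)"
    using w_cases[of i] w_cases[of j] by auto
qed

lemma svm_score_in_milp_vals:
  fixes Q :: "nat \<Rightarrow> nat \<Rightarrow> real"
  assumes "\<forall>i<m. \<forall>j<m. Q i j = Q j i"
    and "card {i. i < m \<and> yt i \<noteq> y i} \<le> B"
    and "\<alpha> \<in> svm_sol m C Q (binlab yt c)"
  shows "svm_score m Qt (binlab yt c) \<alpha> \<in> milp_vals m C Q Qt (binlab y c) B"
  unfolding milp_vals_def svm_score_def
  using milp_feasible_svm_sol[OF assms] by (fastforce simp: mult_ac)

lemma milp_vals_abs_le:
  assumes "C > 0" and "x \<in> milp_vals m C Q Qt yb B"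
  shows "\<bar>x\<bar> \<le> (\<Sum>i<m. C * \<bar>Qt i\<bar>)"
proof -
  obtain \<alpha> yt z u v yp s t R where x: "x = (\<Sum>i<m. z i * Qt i)"
    and feas: "milp_feasible m C Q yb B \<alpha> yt z u v yp s t R"
    using assms(2) unfolding milp_vals_def by blast
  have z_bound: "\<bar>z i\<bar> \<le> C" if "i < m" for i
  proof -
    have "- \<alpha> i \<le> z i" "z i \<le> \<alpha> i" "\<alpha> i \<le> C * (1 - s i)" "s i \<in> {0, 1}"
      using feas that unfolding milp_feasible_def by auto
    then show ?thesis using \<open>C > 0\<close> by auto
  qed
  have "\<bar>x\<bar> \<le> (\<Sum>i<m. \<bar>z i * Qt i\<bar>)" unfolding x by (rule sum_abs)
  also have "\<dots> \<le> (\<Sum>i<m. C * \<bar>Qt i\<bar>)"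
    using z_bound by (intro sum_mono) (simp add: abs_mult mult_right_mono)
  finally show ?thesis .
qed

lemma milp_min_le:
  assumes "C > 0" and "x \<in> milp_vals m C Q Qt yb B"
  shows "milp_min m C Q Qt yb B \<le> x"
proof -
  have "bdd_below (milp_vals m C Q Qt yb B)"
    using milp_vals_abs_le[OF \<open>C > 0\<close>] by (metis abs_le_iff bdd_belowI minus_le_iff)
  then show ?thesis unfolding milp_min_def using assms(2) by (rule cInf_lower[rotated])
qed

lemma le_milp_max:
  assumes "C > 0" and "x \<in> milp_vals m C Q Qt yb B"
  shows "x \<le> milp_max m C Q Qt yb B"
proof -
  have "bdd_above (milp_vals m C Q Qt yb B)"
    using milp_vals_abs_le[OF \<open>C > 0\<close>] by (metis abs_le_iff bdd_aboveI)
  then show ?thesis unfolding milp_max_def using assms(2) by (rule cSup_upper[rotated])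
qed

theorem mainTheorem7:
  fixes K m :: nat and C eps :: real and Q :: "nat \<Rightarrow> nat \<Rightarrow> real" and Qt :: "nat \<Rightarrow> real"
    and y :: "nat \<Rightarrow> nat" and chat :: nat
  assumes C_pos: "C > 0"
    and Q_sym: "\<forall>i<m. \<forall>j<m. Q i j = Q j i"
    and Q_psd: "\<forall>x :: nat \<Rightarrow> real. (\<Sum>i<m. \<Sum>j<m. x i * x j * Q i j) \<ge> 0"
    and y_lab: "\<forall>i<m. y i \<in> {1..K}"
    and chat_cls: "chat \<in> {1..K}"
    and chat_pred: "\<exists>\<alpha> :: nat \<Rightarrow> nat \<Rightarrow> real.
        (\<forall>c\<in>{1..K}. \<alpha> c \<in> svm_sol m C Q (binlab y c)) \<and>
        (\<forall>c\<in>{1..K}. svm_score m Qt (binlab y c) (\<alpha> c) \<le> svm_score m Qt (binlab y chat) (\<alpha> chat))"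
    and cert: "\<forall>c\<in>{1..K}. c \<noteq> chat \<longrightarrow>
        milp_min m C Q Qt (binlab y chat) (nat \<lfloor>eps * real m\<rfloor>)
          > milp_max m C Q Qt (binlab y c) (nat \<lfloor>eps * real m\<rfloor>)"
  shows "\<forall>yt \<in> adv_set m K eps y. \<forall>\<alpha> :: nat \<Rightarrow> nat \<Rightarrow> real.
           (\<forall>c\<in>{1..K}. \<alpha> c \<in> svm_sol m C Q (binlab yt c)) \<longrightarrow>
           (\<forall>c\<in>{1..K}. c \<noteq> chat \<longrightarrow>
              svm_score m Qt (binlab yt chat) (\<alpha> chat) - svm_score m Qt (binlab yt c) (\<alpha> c) > 0)"
proof (intro ballI allI impI)
  fix yt \<alpha> c
  assume yt: "yt \<in> adv_set m K eps y"
    and sols: "\<forall>c\<in>{1..K}. \<alpha> c \<in> svm_sol m C Q (binlab yt c)"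
    and c: "c \<in> {1..K}" and "c \<noteq> chat"
  define B where "B = nat \<lfloor>eps * real m\<rfloor>"
  have card: "card {i. i < m \<and> yt i \<noteq> y i} \<le> B" using yt by (simp add: adv_set_def B_def)
  have "milp_min m C Q Qt (binlab y chat) B \<le> svm_score m Qt (binlab yt chat) (\<alpha> chat)"
    using svm_score_in_milp_vals[OF Q_sym card] sols chat_cls by (blast intro: milp_min_le[OF C_pos])
  moreover have "svm_score m Qt (binlab yt c) (\<alpha> c) \<le> milp_max m C Q Qt (binlab y c) B"
    using svm_score_in_milp_vals[OF Q_sym card] sols c by (blast intro: le_milp_max[OF C_pos])
  moreover have "milp_min m C Q Qt (binlab y chat) B > milp_max m C Q Qt (binlab y c) B"
    using cert c \<open>c \<noteq> chat\<close> by (simp add: B_def)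
  ultimately show "svm_score m Qt (binlab yt chat) (\<alpha> chat) - svm_score m Qt (binlab yt c) (\<alpha> c) > 0"
    by linarith
qed

end
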